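(* The 2+2 t-warped (respectively, s-warped) spacetimes are exactly the spacetimes conformal to a 2+2 product of class $\binom10$ (respectively, $\binom01$).
   Context: A spacetime is a 4-dimensional oriented Lorentzian manifold $(M,g)$ of signature $(-,+,+,+)$; statements are local. $g$ is conformal to a 2+2 product if $g = e^{2\lambda}(\hat v+\hat h)$ where in suitable local coordinates $\hat v = \hat v_{ij}(x^1,x^2)dx^idx^j$ is a 2-dimensional Lorentzian metric and $\hat h = \hat h_{AB}(x^3,x^4)dx^Adx^B$ a 2-dimensional Riemannian metric. A 2+2 t-warped spacetime has (locally) $g = e^{2\lambda}\hat v + h$ with $\hat v$ a 2-dimensional Lorentzian metric in $(x^1,x^2)$, $h$ a 2-dimensional Riemannian metric in $(x^3,x^4)$, and $\lambda$ a non-constant function of $(x^3,x^4)$ only; a 2+2 s-warped spacetime has $g = v + e^{2\lambda}\hat h$ with $v$ Lorentzian in $(x^1,x^2)$, $\hat h$ Riemannian in $(x^3,x^4)$, $\lambda$ a non-constant function of $(x^1,x^2)$ only. For a metric conformal to a 2+2 product, the principal planes are the time-like plane $V$ tangent to the $\hat v$-factor, with $g$-orthogonal projector $v$, and its orthogonal space-like plane $H$ with projector $h=g-v$. With $Q_v(x,y) = h(\nabla_{v(x)}v(y))$, symmetric part $S_v$, and trace $\tr S_v = g^{\alpha\beta}S_v(e_\alpha,e_\beta)$, $V$ is minimal iff $\tr S_v=0$; analogously for $H$. Class $\binom10$: $H$ minimal and $V$ not; class $\binom01$: $V$ minimal and $H$ not. *)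

theory Defs
  imports "HOL-Analysis.Analysis"
begin

(* Local coordinate model: points of a coordinate patch are vectors in real^4,
   coordinate indices are 1,2,3,4 :: 4 (x^1,x^2 span the Lorentzian factor). *)

definition pdx :: "4 \<Rightarrow> (real^4 \<Rightarrow> 'b::real_normed_vector) \<Rightarrow> real^4 \<Rightarrow> 'b" where
  "pdx i f x = frechet_derivative f (at x) (axis i 1)"

fun Ck_on :: "nat \<Rightarrow> (real^4) set \<Rightarrow> (real^4 \<Rightarrow> real) \<Rightarrow> bool" where
  "Ck_on 0 D f = continuous_on D f"
| "Ck_on (Suc k) D f = ((\<forall>x\<in>D. f differentiable (at x)) \<and> (\<forall>i. Ck_on k D (pdx i f)))"

definition smooth_fun :: "(real^4) set \<Rightarrow> (real^4 \<Rightarrow> real) \<Rightarrow> bool" where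
  "smooth_fun D f = (\<forall>k. Ck_on k D f)"

definition smooth_vec :: "(real^4) set \<Rightarrow> (real^4 \<Rightarrow> real^4) \<Rightarrow> bool" where
  "smooth_vec D F = (\<forall>k. smooth_fun D (\<lambda>x. F x $ k))"

definition smooth_mat :: "(real^4) set \<Rightarrow> (real^4 \<Rightarrow> real^4^4) \<Rightarrow> bool" where
  "smooth_mat D A = (\<forall>a b. smooth_fun D (\<lambda>x. A x $ a $ b))"

definition bil :: "real^4^4 \<Rightarrow> real^4 \<Rightarrow> real^4 \<Rightarrow> real" where
  "bil A u w = u \<bullet> (A *v w)"

definition eta4 :: "4 \<Rightarrow> 4 \<Rightarrow> real" where
  "eta4 a b = (if a = b then (if a = 1 then -1 else 1) else 0)"

definition lorentzian4 :: "real^4^4 \<Rightarrow> bool" where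
  "lorentzian4 A = (transpose A = A \<and> (\<exists>e::4 \<Rightarrow> real^4. \<forall>a b. bil A (e a) (e b) = eta4 a b))"

definition Vidx :: "4 set" where "Vidx = {1, 2}"
definition Hidx :: "4 set" where "Hidx = {3, 4}"

definition coord_plane :: "4 set \<Rightarrow> (real^4) set" where
  "coord_plane S = span ((\<lambda>i. axis i (1::real)) ` S)"

definition block :: "4 set \<Rightarrow> real^4^4 \<Rightarrow> bool" where
  "block S A = (\<forall>a b. a \<notin> S \<or> b \<notin> S \<longrightarrow> A $ a $ b = 0)"

definition lorentzian2 :: "4 set \<Rightarrow> real^4^4 \<Rightarrow> bool" where
  "lorentzian2 S A = (transpose A = A \<and> (\<exists>u w. u \<in> coord_plane S \<and> w \<in> coord_plane S \<and>
      bil A u u = -1 \<and> bil A w w = 1 \<and> bil A u w = 0))"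

definition riemannian2 :: "4 set \<Rightarrow> real^4^4 \<Rightarrow> bool" where
  "riemannian2 S A = (transpose A = A \<and> (\<exists>u w. u \<in> coord_plane S \<and> w \<in> coord_plane S \<and>
      bil A u u = 1 \<and> bil A w w = 1 \<and> bil A u w = 0))"

definition dep12 :: "(real^4) set \<Rightarrow> (real^4 \<Rightarrow> 'b) \<Rightarrow> bool" where
  "dep12 D f = (\<exists>F. \<forall>x\<in>D. f x = F (x $ 1) (x $ 2))"

definition dep34 :: "(real^4) set \<Rightarrow> (real^4 \<Rightarrow> 'b) \<Rightarrow> bool" where
  "dep34 D f = (\<exists>F. \<forall>x\<in>D. f x = F (x $ 3) (x $ 4))"

definition product_domain :: "(real^4) set \<Rightarrow> bool" where
  "product_domain D = (\<exists>A B :: (real \<times> real) set. open A \<and> connected A \<and> open B \<and> connected B \<and>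
      D = {x. (x $ 1, x $ 2) \<in> A \<and> (x $ 3, x $ 4) \<in> B})"

definition spacetime :: "(real^4) set \<Rightarrow> (real^4 \<Rightarrow> real^4^4) \<Rightarrow> bool" where
  "spacetime U G = (open U \<and> smooth_mat U G \<and> (\<forall>x\<in>U. lorentzian4 (G x)))"

definition diffeo :: "(real^4 \<Rightarrow> real^4) \<Rightarrow> (real^4) set \<Rightarrow> (real^4) set \<Rightarrow> bool" where
  "diffeo \<phi> D W = (bij_betw \<phi> D W \<and> smooth_vec D \<phi> \<and>
      (\<exists>\<psi>. smooth_vec W \<psi> \<and> (\<forall>x\<in>D. \<psi> (\<phi> x) = x) \<and> (\<forall>y\<in>W. \<phi> (\<psi> y) = y)))"

text \<open>Components of the metric in the new coordinates given by the chart parametrisation phi.\<close>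
definition pullback :: "(real^4 \<Rightarrow> real^4^4) \<Rightarrow> (real^4 \<Rightarrow> real^4) \<Rightarrow> real^4 \<Rightarrow> real^4^4" where
  "pullback G \<phi> x = (\<chi> a b. bil (G (\<phi> x)) (pdx a \<phi> x) (pdx b \<phi> x))"

definition conf_product :: "(real^4 \<Rightarrow> real^4^4) \<Rightarrow> (real^4) set \<Rightarrow> bool" where
  "conf_product Gm D = (\<exists>lam vh hh. smooth_fun D lam \<and> smooth_mat D vh \<and> smooth_mat D hh \<and>
      dep12 D vh \<and> dep34 D hh \<and>
      (\<forall>x\<in>D. block Vidx (vh x) \<and> lorentzian2 Vidx (vh x) \<and> block Hidx (hh x) \<and> riemannian2 Hidx (hh x) \<and>
         Gm x = exp (2 * lam x) *\<^sub>R (vh x + hh x)))"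

definition t_warped :: "(real^4 \<Rightarrow> real^4^4) \<Rightarrow> (real^4) set \<Rightarrow> bool" where
  "t_warped Gm D = (\<exists>lam vh h. smooth_fun D lam \<and> smooth_mat D vh \<and> smooth_mat D h \<and>
      dep34 D lam \<and> (\<exists>x\<in>D. \<exists>y\<in>D. lam x \<noteq> lam y) \<and> dep12 D vh \<and> dep34 D h \<and>
      (\<forall>x\<in>D. block Vidx (vh x) \<and> lorentzian2 Vidx (vh x) \<and> block Hidx (h x) \<and> riemannian2 Hidx (h x) \<and>
         Gm x = exp (2 * lam x) *\<^sub>R vh x + h x))"

definition s_warped :: "(real^4 \<Rightarrow> real^4^4) \<Rightarrow> (real^4) set \<Rightarrow> bool" where
  "s_warped Gm D = (\<exists>lam v hh. smooth_fun D lam \<and> smooth_mat D v \<and> smooth_mat D hh \<and>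
      dep12 D lam \<and> (\<exists>x\<in>D. \<exists>y\<in>D. lam x \<noteq> lam y) \<and> dep12 D v \<and> dep34 D hh \<and>
      (\<forall>x\<in>D. block Vidx (v x) \<and> lorentzian2 Vidx (v x) \<and> block Hidx (hh x) \<and> riemannian2 Hidx (hh x) \<and>
         Gm x = v x + exp (2 * lam x) *\<^sub>R hh x))"

definition christoffel :: "(real^4 \<Rightarrow> real^4^4) \<Rightarrow> 4 \<Rightarrow> 4 \<Rightarrow> 4 \<Rightarrow> real^4 \<Rightarrow> real" where
  "christoffel Gm k i j x = (1/2) * (\<Sum>l\<in>UNIV. matrix_inv (Gm x) $ k $ l *
      (pdx i (\<lambda>y. Gm y $ j $ l) x + pdx j (\<lambda>y. Gm y $ i $ l) x - pdx l (\<lambda>y. Gm y $ i $ j) x))"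

definition cov :: "(real^4 \<Rightarrow> real^4^4) \<Rightarrow> real^4 \<Rightarrow> (real^4 \<Rightarrow> real^4) \<Rightarrow> real^4 \<Rightarrow> real^4" where
  "cov Gm X Y x = (\<chi> k. (\<Sum>i\<in>UNIV. X $ i * pdx i (\<lambda>y. Y y $ k) x) +
      (\<Sum>i\<in>UNIV. \<Sum>j\<in>UNIV. christoffel Gm k i j x * X $ i * Y x $ j))"

definition gproj :: "(real^4 \<Rightarrow> real^4^4) \<Rightarrow> 4 set \<Rightarrow> real^4 \<Rightarrow> real^4^4" where
  "gproj Gm S x = (THE P. (\<forall>u. P *v u \<in> coord_plane S) \<and>
      (\<forall>u w. w \<in> coord_plane S \<longrightarrow> bil (Gm x) (u - P *v u) w = 0))"

definition vproj :: "(real^4 \<Rightarrow> real^4^4) \<Rightarrow> real^4 \<Rightarrow> real^4^4" where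
  "vproj Gm x = gproj Gm Vidx x"

definition hproj :: "(real^4 \<Rightarrow> real^4^4) \<Rightarrow> real^4 \<Rightarrow> real^4^4" where
  "hproj Gm x = mat 1 - vproj Gm x"

definition Q_v :: "(real^4 \<Rightarrow> real^4^4) \<Rightarrow> real^4 \<Rightarrow> real^4 \<Rightarrow> real^4 \<Rightarrow> real^4" where
  "Q_v Gm u w x = hproj Gm x *v cov Gm (vproj Gm x *v u) (\<lambda>y. vproj Gm y *v w) x"

definition Q_h :: "(real^4 \<Rightarrow> real^4^4) \<Rightarrow> real^4 \<Rightarrow> real^4 \<Rightarrow> real^4 \<Rightarrow> real^4" where
  "Q_h Gm u w x = vproj Gm x *v cov Gm (hproj Gm x *v u) (\<lambda>y. hproj Gm y *v w) x"

definition tr_S_v :: "(real^4 \<Rightarrow> real^4^4) \<Rightarrow> real^4 \<Rightarrow> real^4" where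
  "tr_S_v Gm x = (\<Sum>a\<in>UNIV. \<Sum>b\<in>UNIV. matrix_inv (Gm x) $ a $ b *\<^sub>R
      ((1/2) *\<^sub>R (Q_v Gm (axis a 1) (axis b 1) x + Q_v Gm (axis b 1) (axis a 1) x)))"

definition tr_S_h :: "(real^4 \<Rightarrow> real^4^4) \<Rightarrow> real^4 \<Rightarrow> real^4" where
  "tr_S_h Gm x = (\<Sum>a\<in>UNIV. \<Sum>b\<in>UNIV. matrix_inv (Gm x) $ a $ b *\<^sub>R
      ((1/2) *\<^sub>R (Q_h Gm (axis a 1) (axis b 1) x + Q_h Gm (axis b 1) (axis a 1) x)))"

definition minimal_V :: "(real^4 \<Rightarrow> real^4^4) \<Rightarrow> (real^4) set \<Rightarrow> bool" where
  "minimal_V Gm D = (\<forall>x\<in>D. tr_S_v Gm x = 0)"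

definition minimal_H :: "(real^4 \<Rightarrow> real^4^4) \<Rightarrow> (real^4) set \<Rightarrow> bool" where
  "minimal_H Gm D = (\<forall>x\<in>D. tr_S_h Gm x = 0)"

definition class10 :: "(real^4 \<Rightarrow> real^4^4) \<Rightarrow> (real^4) set \<Rightarrow> bool" where
  "class10 Gm D = (minimal_H Gm D \<and> \<not> minimal_V Gm D)"

definition class01 :: "(real^4 \<Rightarrow> real^4^4) \<Rightarrow> (real^4) set \<Rightarrow> bool" where
  "class01 Gm D = (minimal_V Gm D \<and> \<not> minimal_H Gm D)"

definition locally_chart :: "((real^4 \<Rightarrow> real^4^4) \<Rightarrow> (real^4) set \<Rightarrow> bool) \<Rightarrow> (real^4) set \<Rightarrow> (real^4 \<Rightarrow> real^4^4) \<Rightarrow> bool" where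
  "locally_chart P U G = (\<forall>p\<in>U. \<exists>W D \<phi>. open W \<and> p \<in> W \<and> W \<subseteq> U \<and> product_domain D \<and>
      diffeo \<phi> D W \<and> P (pullback G \<phi>) D)"

end

theory Submission
  imports Defs
begin

text \<open>In a chart where \<open>g = e\<^sup>2\<^sup>\<lambda> (v\<^sub>1 + h\<^sub>1)\<close>, the Christoffel symbols give
  \<open>tr S\<^sub>v = -2 g\<^sup>-\<^sup>1(d\<lambda>|\<^sub>H)\<close> and \<open>tr S\<^sub>h = -2 g\<^sup>-\<^sup>1(d\<lambda>|\<^sub>V)\<close>: only the derivatives of
  the conformal factor normal to a principal plane enter its mean curvature, because the factor metrics
  depend only on their own coordinates. So \<open>H\<close> is minimal iff \<open>\<lambda>\<close> depends only on \<open>x\<^sup>3, x\<^sup>4\<close>,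
  \<open>V\<close> is minimal iff \<open>\<lambda>\<close> depends only on \<open>x\<^sup>1, x\<^sup>2\<close>, and on a connected product domain both
  together force \<open>\<lambda>\<close> to be constant. Hence class \<open>(1 0)\<close> means \<open>\<lambda> = \<lambda>(x\<^sup>3, x\<^sup>4)\<close> non-constant,
  and then absorbing \<open>e\<^sup>2\<^sup>\<lambda>\<close> into \<open>h\<^sub>1\<close> yields the t-warped form \<open>e\<^sup>2\<^sup>\<lambda> v\<^sub>1 + h\<close>; class
  \<open>(0 1)\<close> and s-warped metrics correspond in the same way.\<close>

section \<open>Coordinate derivatives and smoothness\<close>

lemma pdx_eq: "(f has_derivative f') (at x) \<Longrightarrow> pdx i f x = f' (axis i 1)"
  unfolding pdx_def by (metis frechet_derivative_at)

lemma pdx_eq_on_open: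
  assumes "(f has_derivative f') (at x)" "open D" "x \<in> D" "\<And>y. y \<in> D \<Longrightarrow> f y = g y"
  shows "pdx i g x = f' (axis i 1)"
  by (rule pdx_eq, rule has_derivative_transform_within_open[OF assms])

lemma differentiable_transform_open:
  assumes "f differentiable at x" "open D" "x \<in> D" "\<And>y. y \<in> D \<Longrightarrow> f y = g y"
  shows "g differentiable at x"
  using assms unfolding differentiable_def by (meson has_derivative_transform_within_open)

lemma pdx_cong_open:
  assumes "f differentiable at x" "open D" "x \<in> D" "\<And>y. y \<in> D \<Longrightarrow> f y = g y"
  shows "pdx i f x = pdx i g x"
  unfolding pdx_def using frechet_derivative_transform_within_open[OF assms] by simp

lemma pdx_const_on_open:
  assumes "open D" "x \<in> D" "\<And>y. y \<in> D \<Longrightarrow> f y = c"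
  shows "pdx i f x = 0"
  using pdx_eq_on_open[OF has_derivative_const[of c] assms(1,2), of f i] assms(3) by simp

lemma Ck_on_cong:
  assumes "open D" "\<And>x. x \<in> D \<Longrightarrow> f x = g x" "Ck_on k D f"
  shows "Ck_on k D g"
  using assms(2,3)
proof (induction k arbitrary: f g)
  case 0
  then show ?case by (metis Ck_on.simps(1) continuous_on_cong)
next
  case (Suc k)
  have df: "\<And>x. x \<in> D \<Longrightarrow> f differentiable at x" using Suc.prems by simp
  have "Ck_on k D (pdx i g)" for i
    using Suc.IH[of "pdx i f" "pdx i g"] Suc.prems pdx_cong_open[OF df assms(1) _ Suc.prems(1)] by simp
  with Suc.prems show ?case
    using differentiable_transform_open[OF df assms(1) _ Suc.prems(1)] by simp
qed

lemma Ck_on_Suc_imp: "Ck_on (Suc k) D f \<Longrightarrow> Ck_on k D f"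
  by (induction k arbitrary: f)
    (simp_all add: continuous_at_imp_continuous_on differentiable_imp_continuous_within)

lemma Ck_on_const: "Ck_on k D (\<lambda>x. c)"
proof (induction k arbitrary: c)
  case (Suc k)
  have "pdx i (\<lambda>x. c) = (\<lambda>x. 0)" for i
    using pdx_eq[OF has_derivative_const[of c]] by (simp add: fun_eq_iff)
  then show ?case using Suc by simp
qed simp

text \<open>Sums and products are treated simultaneously, since the derivative of a product is a sum.\<close>
lemma Ck_on_add_mult:
  assumes "open D" "Ck_on k D f" "Ck_on k D g"
  shows "Ck_on k D (\<lambda>x. f x + g x) \<and> Ck_on k D (\<lambda>x. f x * g x)"
  using assms(2,3)
proof (induction k arbitrary: f g)
  case 0 then show ?case by (simp add: continuous_on_add continuous_on_mult)
next
  case (Suc k)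
  have kf: "Ck_on k D f" "Ck_on k D g" using Suc.prems Ck_on_Suc_imp by auto
  have pf: "Ck_on k D (pdx i f)" "Ck_on k D (pdx i g)" for i using Suc.prems by auto
  have add: "pdx i (\<lambda>x. f x + g x) x = pdx i f x + pdx i g x"
    and mult: "pdx i (\<lambda>x. f x * g x) x = f x * pdx i g x + pdx i f x * g x" if "x \<in> D" for i x
  proof -
    from Suc.prems that obtain f' g' where a: "(f has_derivative f') (at x)" "(g has_derivative g') (at x)"
      unfolding Ck_on.simps differentiable_def by blast
    show "pdx i (\<lambda>x. f x + g x) x = pdx i f x + pdx i g x"
      using pdx_eq[OF has_derivative_add[OF a]] pdx_eq[OF a(1)] pdx_eq[OF a(2)] by simp
    show "pdx i (\<lambda>x. f x * g x) x = f x * pdx i g x + pdx i f x * g x"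
      using pdx_eq[OF has_derivative_mult[OF a]] pdx_eq[OF a(1)] pdx_eq[OF a(2)] by simp
  qed
  have "Ck_on k D (pdx i (\<lambda>x. f x + g x))" for i
    by (rule Ck_on_cong[OF assms(1) _ conjunct1[OF Suc.IH[OF pf]]]) (simp add: add)
  moreover have "Ck_on k D (pdx i (\<lambda>x. f x * g x))" for i
  proof -
    have "Ck_on k D (\<lambda>x. f x * pdx i g x)" "Ck_on k D (\<lambda>x. pdx i f x * g x)"
      using Suc.IH[OF kf(1) pf(2)] Suc.IH[OF pf(1) kf(2)] by blast+
    then have "Ck_on k D (\<lambda>x. f x * pdx i g x + pdx i f x * g x)"
      using Suc.IH by blast
    then show ?thesis by (rule Ck_on_cong[OF assms(1), rotated]) (simp add: mult)
  qed
  moreover have "\<forall>x\<in>D. (\<lambda>x. f x + g x) differentiable at x" "\<forall>x\<in>D. (\<lambda>x. f x * g x) differentiable at x"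
    using Suc.prems by auto
  ultimately show ?case by simp
qed

lemma Ck_on_exp:
  assumes "open D" "Ck_on k D f"
  shows "Ck_on k D (\<lambda>x. exp (f x))"
  using assms(2)
proof (induction k arbitrary: f)
  case 0 then show ?case by (simp add: continuous_on_exp)
next
  case (Suc k)
  have df: "\<forall>x\<in>D. f differentiable at x" and kf: "Ck_on k D f" and pf: "Ck_on k D (pdx i f)" for i
    using Suc.prems Ck_on_Suc_imp by auto
  have exp_deriv: "((\<lambda>x. exp (f x)) has_derivative (\<lambda>h. exp (f x) * f' h)) (at x)"
    if "(f has_derivative f') (at x)" for x f'
    using has_derivative_exp[OF that] by (simp add: mult.commute)
  have "Ck_on k D (pdx i (\<lambda>x. exp (f x)))" for i
  proof -
    have eq: "pdx i (\<lambda>x. exp (f x)) x = exp (f x) * pdx i f x" if "x \<in> D" for x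
    proof -
      from df that obtain f' where f': "(f has_derivative f') (at x)" unfolding differentiable_def by blast
      show ?thesis using pdx_eq[OF exp_deriv[OF f']] pdx_eq[OF f'] by simp
    qed
    have "Ck_on k D (\<lambda>x. exp (f x) * pdx i f x)"
      using Ck_on_add_mult[OF assms(1) Suc.IH[OF kf] pf] by blast
    then show ?thesis by (rule Ck_on_cong[OF assms(1), rotated]) (simp add: eq)
  qed
  moreover have "(\<lambda>x. exp (f x)) differentiable at x" if "x \<in> D" for x
    using df that exp_deriv unfolding differentiable_def by blast
  ultimately show ?case by simp
qed

lemma smooth_fun_mult: "open D \<Longrightarrow> smooth_fun D f \<Longrightarrow> smooth_fun D g \<Longrightarrow> smooth_fun D (\<lambda>x. f x * g x)"
  unfolding smooth_fun_def using Ck_on_add_mult by blast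

lemma smooth_fun_exp_scale:
  assumes "open D" "smooth_fun D f" shows "smooth_fun D (\<lambda>x. exp (c * f x))"
proof -
  have "smooth_fun D (\<lambda>x. c * f x)"
    using smooth_fun_mult[OF assms(1) _ assms(2)] Ck_on_const unfolding smooth_fun_def by blast
  then show ?thesis unfolding smooth_fun_def using Ck_on_exp[OF assms(1)] by blast
qed

lemma smooth_fun_differentiable: "smooth_fun D f \<Longrightarrow> x \<in> D \<Longrightarrow> f differentiable at x"
  unfolding smooth_fun_def by (metis Ck_on.simps(2))

lemma smooth_mat_differentiable: "smooth_mat D A \<Longrightarrow> x \<in> D \<Longrightarrow> (\<lambda>y. A y $ a $ b) differentiable at x"
  unfolding smooth_mat_def using smooth_fun_differentiable by blast

lemma smooth_mat_exp_scale:
  "open D \<Longrightarrow> smooth_fun D f \<Longrightarrow> smooth_mat D A \<Longrightarrow> smooth_mat D (\<lambda>x. exp (c * f x) *\<^sub>R A x)"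
  unfolding smooth_mat_def using smooth_fun_mult smooth_fun_exp_scale by simp

section \<open>Coordinate planes and block-diagonal metrics\<close>

lemma Hidx_eq_compl: "Hidx = - Vidx"
  unfolding Vidx_def Hidx_def using exhaust_4 by auto

definition coord_proj :: "4 set \<Rightarrow> real^4^4" where
  "coord_proj S = (\<chi> a b. if a = b \<and> a \<in> S then 1 else 0)"

lemma coord_proj_mv: "(coord_proj S *v u) $ k = (if k \<in> S then u $ k else 0)"
proof -
  have "(\<Sum>j\<in>UNIV. (if k = j \<and> k \<in> S then 1 else 0) * u $ j) =
      (\<Sum>j\<in>UNIV. if k = j then (if k \<in> S then u $ j else 0) else 0)"
    by (rule sum.cong) auto
  then show ?thesis unfolding coord_proj_def matrix_vector_mult_def by simp
qed

lemma coord_proj_compl: "mat 1 - coord_proj S = coord_proj (- S)"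
  unfolding coord_proj_def mat_def by (auto simp: vec_eq_iff)

lemma coord_plane_iff: "u \<in> coord_plane S \<longleftrightarrow> (\<forall>k. k \<notin> S \<longrightarrow> u $ k = 0)"
proof
  assume "u \<in> coord_plane S"
  moreover have "span ((\<lambda>i. axis i (1::real)) ` S) \<subseteq> {u. \<forall>k. k \<notin> S \<longrightarrow> u $ k = 0}"
    by (rule span_minimal) (auto simp: subspace_def axis_def)
  ultimately show "\<forall>k. k \<notin> S \<longrightarrow> u $ k = 0" unfolding coord_plane_def by blast
next
  assume h: "\<forall>k. k \<notin> S \<longrightarrow> u $ k = 0"
  have "u = (\<Sum>i\<in>UNIV. u $ i *\<^sub>R axis i 1)"
    by (simp add: basis_expansion flip: scalar_mult_eq_scaleR)
  also have "\<dots> = (\<Sum>i\<in>S. u $ i *\<^sub>R axis i 1)"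
    by (rule sum.mono_neutral_right) (use h in auto)
  also have "\<dots> \<in> coord_plane S" unfolding coord_plane_def
    by (intro span_sum span_scale span_base) auto
  finally show "u \<in> coord_plane S" .
qed

lemma bil_expand: "bil M u w = (\<Sum>a\<in>UNIV. \<Sum>b\<in>UNIV. u $ a * M $ a $ b * w $ b)"
  unfolding bil_def inner_vec_def matrix_vector_mult_def by (simp add: sum_distrib_left mult.assoc)

lemma sum_UNIV_pair:
  assumes "i \<noteq> j" "\<And>k. k \<noteq> i \<Longrightarrow> k \<noteq> j \<Longrightarrow> f k = 0"
  shows "(\<Sum>k\<in>UNIV. f k) = f i + f (j::4)"
proof -
  have "(\<Sum>k\<in>UNIV. f k) = (\<Sum>k\<in>{i, j}. f k)"
    by (rule sum.mono_neutral_right) (use assms in auto)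
  then show ?thesis using assms(1) by simp
qed

lemma bil_pair:
  assumes "i \<noteq> j" "\<And>k. k \<noteq> i \<Longrightarrow> k \<noteq> j \<Longrightarrow> u $ k = 0" "\<And>k. k \<noteq> i \<Longrightarrow> k \<noteq> j \<Longrightarrow> w $ k = 0"
  shows "bil M u w = u$i * M$i$i * w$i + u$i * M$i$j * w$j + u$j * M$j$i * w$i + u$j * M$j$j * w$j"
proof -
  have "bil M u w = (\<Sum>a\<in>UNIV. u$a * M$a$i * w$i + u$a * M$a$j * w$j)"
    unfolding bil_expand by (rule sum.cong[OF refl], rule sum_UNIV_pair[OF assms(1)]) (use assms(3) in simp)
  also have "\<dots> = u$i * M$i$i * w$i + u$i * M$i$j * w$j + (u$j * M$j$i * w$i + u$j * M$j$j * w$j)"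
    by (rule sum_UNIV_pair[OF assms(1)]) (use assms(2) in simp)
  finally show ?thesis by simp
qed

lemma transpose_eq_imp_symmetric: "transpose A = A \<Longrightarrow> A $ a $ b = A $ b $ a"
  by (metis transpose_def vec_lambda_beta)

definition det2 :: "real^4^4 \<Rightarrow> 4 \<Rightarrow> 4 \<Rightarrow> real" where
  "det2 M i j = M$i$i * M$j$j - M$i$j * M$i$j"

text \<open>Lagrange's identity for the form restricted to the plane:
  \<open>Q(u,u) Q(w,w) - Q(u,w)\<^sup>2 = det2 M i j * (u\<^sub>i w\<^sub>j - u\<^sub>j w\<^sub>i)\<^sup>2\<close>.\<close>
lemma det2_nonzero_if_orthogonal_pair:
  fixes M :: "real^4^4"
  assumes "i \<noteq> j" "M$j$i = M$i$j"
    and "\<And>k. k \<noteq> i \<Longrightarrow> k \<noteq> j \<Longrightarrow> u $ k = 0" "\<And>k. k \<noteq> i \<Longrightarrow> k \<noteq> j \<Longrightarrow> w $ k = 0"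
    and "bil M u u \<noteq> 0" "bil M w w \<noteq> 0" "bil M u w = 0"
  shows "det2 M i j \<noteq> 0"
proof
  assume det: "det2 M i j = 0"
  have "bil M u u * bil M w w - (bil M u w)^2 = det2 M i j * (u$i * w$j - u$j * w$i)^2"
    using bil_pair[OF assms(1) assms(3) assms(3), of M] bil_pair[OF assms(1) assms(4) assms(4), of M]
      bil_pair[OF assms(1) assms(3) assms(4), of M] assms(2)
    by (simp add: det2_def power2_eq_square algebra_simps)
  then show False using det assms(5-7) by simp
qed

lemma lorentzian2_det2:
  assumes "lorentzian2 {i, j} A" "i \<noteq> j" shows "det2 A i j \<noteq> 0"
proof -
  obtain u w where "u \<in> coord_plane {i, j}" "w \<in> coord_plane {i, j}"
    "bil A u u = -1" "bil A w w = 1" "bil A u w = 0" and "transpose A = A"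
    using assms(1) unfolding lorentzian2_def by blast
  then show ?thesis
    by (intro det2_nonzero_if_orthogonal_pair[OF assms(2), of A u w])
      (auto simp: coord_plane_iff transpose_eq_imp_symmetric[of A j i])
qed

lemma riemannian2_det2:
  assumes "riemannian2 {i, j} A" "i \<noteq> j" shows "det2 A i j \<noteq> 0"
proof -
  obtain u w where "u \<in> coord_plane {i, j}" "w \<in> coord_plane {i, j}"
    "bil A u u = 1" "bil A w w = 1" "bil A u w = 0" and "transpose A = A"
    using assms(1) unfolding riemannian2_def by blast
  then show ?thesis
    by (intro det2_nonzero_if_orthogonal_pair[OF assms(2), of A u w])
      (auto simp: coord_plane_iff transpose_eq_imp_symmetric[of A j i])
qed

definition block_diagonal :: "real^4^4 \<Rightarrow> bool" where
  "block_diagonal M \<longleftrightarrow> (\<forall>a b. (a \<in> Vidx \<and> b \<in> Hidx) \<or> (a \<in> Hidx \<and> b \<in> Vidx) \<longrightarrow> M $ a $ b = 0)"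

definition block_inverse :: "real^4^4 \<Rightarrow> real^4^4" where
  "block_inverse M = (\<chi> a b.
     if a = 1 \<and> b = 1 then M$2$2 / det2 M 1 2 else if a = 2 \<and> b = 2 then M$1$1 / det2 M 1 2
     else if (a = 1 \<and> b = 2) \<or> (a = 2 \<and> b = 1) then - M$1$2 / det2 M 1 2
     else if a = 3 \<and> b = 3 then M$4$4 / det2 M 3 4 else if a = 4 \<and> b = 4 then M$3$3 / det2 M 3 4
     else if (a = 3 \<and> b = 4) \<or> (a = 4 \<and> b = 3) then - M$3$4 / det2 M 3 4 else 0)"

lemma block_diagonal_zeros:
  assumes "block_diagonal M"
  shows "M$1$3 = 0" "M$1$4 = 0" "M$2$3 = 0" "M$2$4 = 0" "M$3$1 = 0" "M$4$1 = 0" "M$3$2 = 0" "M$4$2 = 0"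
  using assms unfolding block_diagonal_def Vidx_def Hidx_def by auto

lemma block_inverse_is_inverse:
  assumes "transpose M = M" "block_diagonal M" "det2 M 1 2 \<noteq> 0" "det2 M 3 4 \<noteq> 0"
  shows "M ** block_inverse M = mat 1" "block_inverse M ** M = mat 1"
  unfolding block_inverse_def using assms(3,4)
  by (simp_all add: vec_eq_iff forall_4 matrix_matrix_mult_def sum_4 mat_def field_simps
      block_diagonal_zeros[OF assms(2)] transpose_eq_imp_symmetric[OF assms(1), of 2 1]
      transpose_eq_imp_symmetric[OF assms(1), of 4 3])
    (simp_all add: det2_def)

lemma matrix_inv_eq:
  fixes A B :: "'a::field^'n^'n"
  assumes "A ** B = mat 1" "B ** A = mat 1"
  shows "matrix_inv A = B"
proof -
  have "A ** matrix_inv A = mat 1 \<and> matrix_inv A ** A = mat 1"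
    unfolding matrix_inv_def by (rule someI[of _ B]) (use assms in simp)
  then have "matrix_inv A ** A = mat 1" by blast
  have "matrix_inv A = matrix_inv A ** (A ** B)" by (simp add: assms(1) matrix_mul_rid)
  also have "\<dots> = (matrix_inv A ** A) ** B" by (simp add: matrix_mul_assoc)
  also have "\<dots> = B" using \<open>matrix_inv A ** A = mat 1\<close> by (simp add: matrix_mul_lid)
  finally show ?thesis .
qed

lemma block_inverse_offdiagonal:
  "(k \<in> Hidx \<and> l \<in> Vidx) \<or> (k \<in> Vidx \<and> l \<in> Hidx) \<Longrightarrow> block_inverse M $ k $ l = 0"
  unfolding block_inverse_def Vidx_def Hidx_def by auto

lemma block_inverse_trace:
  assumes "transpose M = M" "det2 M 1 2 \<noteq> 0" "det2 M 3 4 \<noteq> 0"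
  shows "(\<Sum>a\<in>Vidx. \<Sum>b\<in>Vidx. block_inverse M $ a $ b * M $ a $ b) = 2"
    "(\<Sum>a\<in>Hidx. \<Sum>b\<in>Hidx. block_inverse M $ a $ b * M $ a $ b) = 2"
  using assms(2,3) unfolding Vidx_def Hidx_def block_inverse_def
  by (simp_all add: field_simps transpose_eq_imp_symmetric[OF assms(1), of 2 1]
      transpose_eq_imp_symmetric[OF assms(1), of 4 3]) (simp_all add: det2_def algebra_simps)

lemma gproj_eq_coord_proj:
  assumes S: "S = {i, j}" and ij: "i \<noteq> j" and sym: "Gm x $ j $ i = Gm x $ i $ j"
    and det: "det2 (Gm x) i j \<noteq> 0"
    and off: "\<And>a b. a \<notin> S \<Longrightarrow> b \<in> S \<Longrightarrow> Gm x $ a $ b = 0"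
  shows "gproj Gm S x = coord_proj S"
  unfolding gproj_def
proof (rule the_equality)
  have orth: "bil (Gm x) (u - coord_proj S *v u) w = 0" if "w \<in> coord_plane S" for u w
    unfolding bil_expand
  proof (intro sum.neutral ballI)
    fix a b
    show "(u - coord_proj S *v u) $ a * Gm x $ a $ b * w $ b = 0"
      using that off[of a b] by (cases "a \<in> S"; cases "b \<in> S") (auto simp: coord_proj_mv coord_plane_iff)
  qed
  then show "(\<forall>u. coord_proj S *v u \<in> coord_plane S) \<and>
      (\<forall>u w. w \<in> coord_plane S \<longrightarrow> bil (Gm x) (u - coord_proj S *v u) w = 0)"
    by (simp add: coord_plane_iff coord_proj_mv)
  fix P assume P: "(\<forall>u. P *v u \<in> coord_plane S) \<and>
      (\<forall>u w. w \<in> coord_plane S \<longrightarrow> bil (Gm x) (u - P *v u) w = 0)"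
  have "P *v u = coord_proj S *v u" for u
  proof -
    define z where "z = P *v u - coord_proj S *v u"
    have zS: "\<And>k. k \<noteq> i \<Longrightarrow> k \<noteq> j \<Longrightarrow> z $ k = 0"
      using P unfolding z_def by (auto simp: coord_plane_iff coord_proj_mv S)
    have z_orth: "bil (Gm x) z w = 0" if "w \<in> coord_plane S" for w
    proof -
      have "z = (u - coord_proj S *v u) - (u - P *v u)" unfolding z_def by simp
      then have "bil (Gm x) z w = bil (Gm x) (u - coord_proj S *v u) w - bil (Gm x) (u - P *v u) w"
        unfolding bil_def by (simp add: inner_diff_left)
      then show ?thesis using P orth[OF that, of u] that by simp
    qed
    have "axis i 1 \<in> coord_plane S" "axis j 1 \<in> coord_plane S"
      by (auto simp: coord_plane_iff S axis_def)
    then have e: "z$i * Gm x$i$i + z$j * Gm x$i$j = 0" "z$i * Gm x$i$j + z$j * Gm x$j$j = 0"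
      using z_orth bil_pair[OF ij zS, of "axis i 1" "Gm x"] bil_pair[OF ij zS, of "axis j 1" "Gm x"] ij sym
      by (simp_all add: axis_def)
    have "z$i * det2 (Gm x) i j = Gm x$j$j * (z$i * Gm x$i$i + z$j * Gm x$i$j) - Gm x$i$j * (z$i * Gm x$i$j + z$j * Gm x$j$j)"
      "z$j * det2 (Gm x) i j = Gm x$i$i * (z$i * Gm x$i$j + z$j * Gm x$j$j) - Gm x$i$j * (z$i * Gm x$i$i + z$j * Gm x$i$j)"
      unfolding det2_def by (simp_all add: algebra_simps)
    then have "z$i * det2 (Gm x) i j = 0" "z$j * det2 (Gm x) i j = 0"
      by (simp_all only: e mult_zero_right diff_self)
    then have "z$i = 0" "z$j = 0" using det by simp_all
    then have "z = 0" using zS by (metis vec_eq_iff zero_index)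
    then show ?thesis unfolding z_def by simp
  qed
  then show "P = coord_proj S" by (simp add: matrix_eq)
qed

section \<open>Trace of the second fundamental form of a principal plane\<close>

lemma coord_proj_axis: "coord_proj S *v axis a 1 = (if a \<in> S then axis a 1 else 0)"
  by (auto simp: vec_eq_iff coord_proj_mv axis_def)

lemma sum_mult_axis: "(\<Sum>i\<in>UNIV. f i * axis a (1::real) $ i) = f a"
  unfolding axis_def by (simp add: if_distrib[of "(*) _"] sum.delta cong: if_cong)

lemma sum_if_mem:
  fixes f :: "'a::finite \<Rightarrow> real"
  shows "(\<Sum>a\<in>UNIV. if a \<in> S then f a else 0) = (\<Sum>a\<in>S. f a)"
  using sum.inter_restrict[of UNIV f S] by simp

definition normal_grad :: "4 set \<Rightarrow> (real^4 \<Rightarrow> real) \<Rightarrow> real^4 \<Rightarrow> real^4" where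
  "normal_grad T f x = (\<chi> l. if l \<in> T then pdx l f x else 0)"

text \<open>A conformal 2+2 product seen from the principal plane spanned by the coordinates in \<open>S\<close>.\<close>
locale conformally_split_metric =
  fixes D :: "(real^4) set" and S :: "4 set" and Gm :: "real^4 \<Rightarrow> real^4^4"
    and lam :: "real^4 \<Rightarrow> real" and A B :: "real^4 \<Rightarrow> real^4^4" and x :: "real^4"
  assumes open_D: "open D" and x_in_D: "x \<in> D"
    and metric_eq: "\<And>y. y \<in> D \<Longrightarrow> Gm y = exp (2 * lam y) *\<^sub>R (A y + B y)"
    and A_block: "\<And>y a b. y \<in> D \<Longrightarrow> a \<notin> S \<or> b \<notin> S \<Longrightarrow> A y $ a $ b = 0"
    and B_block: "\<And>y a b. y \<in> D \<Longrightarrow> a \<in> S \<or> b \<in> S \<Longrightarrow> B y $ a $ b = 0"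
    and lam_differentiable: "lam differentiable at x"
    and A_differentiable: "\<And>a b. (\<lambda>y. A y $ a $ b) differentiable at x"
    and A_normal_const: "\<And>l a b. l \<notin> S \<Longrightarrow> pdx l (\<lambda>y. A y $ a $ b) x = 0"
    and inv_offdiagonal: "\<And>k l. (k \<in> S \<longleftrightarrow> l \<notin> S) \<Longrightarrow> matrix_inv (Gm x) $ k $ l = 0"
    and inv_trace: "(\<Sum>a\<in>S. \<Sum>b\<in>S. matrix_inv (Gm x) $ a $ b * Gm x $ a $ b) = 2"
    and symmetric: "\<And>a b. Gm x $ a $ b = Gm x $ b $ a"
begin

lemma pdx_tangent_entry:
  assumes "i \<in> S" "j \<in> S" "l \<notin> S"
  shows "pdx l (\<lambda>y. Gm y $ i $ j) x = 2 * pdx l lam x * Gm x $ i $ j"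
proof -
  obtain L where L: "(lam has_derivative L) (at x)"
    using lam_differentiable unfolding differentiable_def by blast
  obtain A' where A': "((\<lambda>y. A y $ i $ j) has_derivative A') (at x)"
    using A_differentiable unfolding differentiable_def by blast
  have deriv: "((\<lambda>y. exp (2 * lam y) * A y $ i $ j) has_derivative
      (\<lambda>h. exp (2 * lam x) * A' h + 2 * L h * exp (2 * lam x) * A x $ i $ j)) (at x)"
    by (rule has_derivative_mult[OF has_derivative_exp[OF has_derivative_mult_right[OF L]] A'])
  moreover have Gm_eq: "exp (2 * lam y) * A y $ i $ j = Gm y $ i $ j" if "y \<in> D" for y
    using metric_eq[OF that] B_block[OF that, of i j] assms(1) by simp
  have "pdx l (\<lambda>y. Gm y $ i $ j) x =
      exp (2 * lam x) * A' (axis l 1) + 2 * L (axis l 1) * exp (2 * lam x) * A x $ i $ j"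
    by (rule pdx_eq_on_open[OF deriv open_D x_in_D Gm_eq])
  moreover have "A' (axis l 1) = 0" using pdx_eq[OF A'] A_normal_const[OF assms(3)] by metis
  ultimately show ?thesis
    using pdx_eq[OF L] Gm_eq[OF x_in_D] by (simp add: algebra_simps)
qed

lemma pdx_mixed_entry:
  assumes "j \<in> S \<longleftrightarrow> l \<notin> S"
  shows "pdx i (\<lambda>y. Gm y $ j $ l) x = 0"
  using assms metric_eq A_block B_block by (intro pdx_const_on_open[OF open_D x_in_D]) auto

lemma christoffel_normal:
  assumes "k \<notin> S" "i \<in> S" "j \<in> S"
  shows "christoffel Gm k i j x = - Gm x $ i $ j * (matrix_inv (Gm x) *v normal_grad (- S) lam x) $ k"
proof -
  have "matrix_inv (Gm x) $ k $ l * (pdx i (\<lambda>y. Gm y $ j $ l) x + pdx j (\<lambda>y. Gm y $ i $ l) x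
      - pdx l (\<lambda>y. Gm y $ i $ j) x) = -2 * Gm x $ i $ j * (matrix_inv (Gm x) $ k $ l * normal_grad (- S) lam x $ l)"
    for l
    using assms pdx_tangent_entry[OF assms(2,3)] pdx_mixed_entry inv_offdiagonal[of k l]
    by (cases "l \<in> S") (simp_all add: normal_grad_def)
  then show ?thesis
    unfolding christoffel_def matrix_vector_mult_def by (simp add: sum_distrib_left)
qed

lemma cov_normal:
  assumes "k \<notin> S" and P: "\<And>y. y \<in> D \<Longrightarrow> P y = coord_proj S"
  shows "cov Gm (P x *v axis a 1) (\<lambda>y. P y *v axis b 1) x $ k =
    (if a \<in> S \<and> b \<in> S then - Gm x $ a $ b * (matrix_inv (Gm x) *v normal_grad (- S) lam x) $ k else 0)"
proof -
  have "pdx i (\<lambda>y. (P y *v axis b 1) $ k) x = 0" for i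
    using assms by (intro pdx_const_on_open[OF open_D x_in_D]) (simp add: coord_proj_mv)
  then show ?thesis
    unfolding cov_def using assms christoffel_normal
    by (simp add: P[OF x_in_D] coord_proj_axis sum_mult_axis)
qed

theorem trace_second_fundamental_form:
  assumes P_eq: "\<And>y. y \<in> D \<Longrightarrow> P y = coord_proj S" and Q_eq: "Q x = coord_proj (- S)"
  shows "(\<Sum>a\<in>UNIV. \<Sum>b\<in>UNIV. matrix_inv (Gm x) $ a $ b *\<^sub>R ((1/2) *\<^sub>R
            (Q x *v cov Gm (P x *v axis a 1) (\<lambda>y. P y *v axis b 1) x +
             Q x *v cov Gm (P x *v axis b 1) (\<lambda>y. P y *v axis a 1) x)))
         = (-2) *\<^sub>R (matrix_inv (Gm x) *v normal_grad (- S) lam x)"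
  (is "?lhs = (-2) *\<^sub>R (?N *v ?g)")
proof (subst vec_eq_iff, intro allI)
  fix k
  show "?lhs $ k = ((-2) *\<^sub>R (?N *v ?g)) $ k"
  proof (cases "k \<in> S")
    case True
    have "(?N *v ?g) $ k = 0"
      unfolding matrix_vector_mult_def vec_lambda_beta using True inv_offdiagonal[of k]
      by (intro sum.neutral) (auto simp: normal_grad_def)
    then show ?thesis using True by (simp add: Q_eq sum_component coord_proj_mv)
  next
    case False
    have cov_k: "cov Gm (P x *v axis a 1) (\<lambda>y. P y *v axis b 1) x $ k =
      (if a \<in> S \<and> b \<in> S then - Gm x $ a $ b * (?N *v ?g) $ k else 0)" for a b
      using False P_eq by (rule cov_normal)
    have "?lhs $ k = (\<Sum>a\<in>UNIV. if a \<in> S then \<Sum>b\<in>UNIV.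
        if b \<in> S then - (?N *v ?g) $ k * (?N $ a $ b * Gm x $ a $ b) else 0 else 0)"
      using cov_k symmetric False
      by (auto simp: Q_eq sum_component coord_proj_mv intro!: sum.cong)
    also have "\<dots> = - (?N *v ?g) $ k * (\<Sum>a\<in>S. \<Sum>b\<in>S. ?N $ a $ b * Gm x $ a $ b)"
      by (simp add: sum_if_mem sum_distrib_left)
    finally show ?thesis using inv_trace by simp
  qed
qed

end

section \<open>Functions of two coordinates on a product domain\<close>

lemma open_coord_product:
  assumes "open A" "open B"
  shows "open {x :: real^4. (x $ i, x $ j) \<in> A \<and> (x $ k, x $ l) \<in> B}"
proof -
  have "open ((\<lambda>x::real^4. (x $ i, x $ j)) -` A)" "open ((\<lambda>x::real^4. (x $ k, x $ l)) -` B)"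
    by (auto intro!: continuous_open_vimage assms continuous_intros)
  then show ?thesis by (simp add: vimage_def Collect_conj_eq open_Int)
qed

lemma product_domain_open: "product_domain D \<Longrightarrow> open D"
  unfolding product_domain_def using open_coord_product by blast

definition set_coords :: "real^4 \<Rightarrow> 4 \<Rightarrow> 4 \<Rightarrow> real \<times> real \<Rightarrow> real^4" where
  "set_coords y i j p = coord_proj (- {i, j}) *v y + fst p *\<^sub>R axis i 1 + snd p *\<^sub>R axis j 1"

lemma set_coords_component:
  "i \<noteq> j \<Longrightarrow> set_coords y i j p $ k = (if k = i then fst p else if k = j then snd p else y $ k)"
  by (auto simp: set_coords_def coord_proj_mv axis_def)

text \<open>The chain rule factors the derivative through a projection killing \<open>e\<^sub>i\<close> and \<open>e\<^sub>j\<close>.\<close>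
lemma pdx_eq_0_if_invariant:
  assumes "open D" "x \<in> D" "i \<noteq> j" "f differentiable at x" "l \<in> {i, j}"
    and inv: "\<And>y. y \<in> D \<Longrightarrow> f (set_coords y i j (x $ i, x $ j)) = f y"
  shows "pdx l f x = (0::real)"
proof -
  define P where "P y = set_coords y i j (x $ i, x $ j)" for y
  have "P x = x" using assms(3) by (simp add: P_def vec_eq_iff set_coords_component)
  obtain f' where f': "(f has_derivative f') (at x)" using assms(4) unfolding differentiable_def by blast
  have "(P has_derivative (\<lambda>h. coord_proj (- {i, j}) *v h)) (at x)"
    unfolding P_def set_coords_def
    by (auto intro!: derivative_eq_intros bounded_linear.has_derivative[OF matrix_vector_mul_bounded_linear])
  then have "((\<lambda>y. f (P y)) has_derivative (\<lambda>h. f' (coord_proj (- {i, j}) *v h))) (at x)"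
    using diff_chain_at[of P _ x f f'] f' \<open>P x = x\<close> by (simp add: o_def)
  then have "pdx l f x = f' (coord_proj (- {i, j}) *v axis l 1)"
    by (rule pdx_eq_on_open[OF _ assms(1,2)]) (simp add: P_def inv)
  also have "coord_proj (- {i, j}) *v axis l 1 = 0"
    using assms(5) by (simp add: coord_proj_axis)
  finally show ?thesis using linear_0[OF has_derivative_linear[OF f']] by simp
qed

lemma const_along_coords:
  fixes f :: "real^4 \<Rightarrow> real"
  assumes "open A" "connected A" "i \<noteq> j"
    and slice: "\<And>p. p \<in> A \<Longrightarrow> set_coords y i j p \<in> D" and "(y $ i, y $ j) \<in> A" "p \<in> A"
    and zero: "\<And>z. z \<in> D \<Longrightarrow> f differentiable at z \<and> pdx i f z = 0 \<and> pdx j f z = 0"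
  shows "f (set_coords y i j p) = f y"
proof -
  define E where "E p = set_coords y i j p" for p
  have E_deriv: "(E has_derivative (\<lambda>h. fst h *\<^sub>R axis i 1 + snd h *\<^sub>R axis j 1)) (at q)" for q
    unfolding E_def set_coords_def by (auto intro!: derivative_eq_intros)
  have "((f \<circ> E) has_derivative (\<lambda>h. 0)) (at q)" if "q \<in> A" for q
  proof -
    have Eq: "E q \<in> D" using slice[OF that] by (simp add: E_def)
    obtain L where L: "(f has_derivative L) (at (E q))"
      using zero[OF Eq] unfolding differentiable_def by blast
    have "L (axis i 1) = 0" "L (axis j 1) = 0"
      using zero[OF Eq] pdx_eq[OF L] by auto
    then have "L \<circ> (\<lambda>h. fst h *\<^sub>R axis i 1 + snd h *\<^sub>R axis j 1) = (\<lambda>h. 0)"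
      using has_derivative_linear[OF L] by (auto simp: fun_eq_iff linear_add linear_scale)
    then show ?thesis using diff_chain_at[OF E_deriv L] by simp
  qed
  then have "(f \<circ> E) (y $ i, y $ j) = (f \<circ> E) p"
    using has_derivative_zero_unique_connected[OF assms(1,2)] assms(5,6) by blast
  moreover have "E (y $ i, y $ j) = y"
    unfolding E_def using assms(3) by (simp add: vec_eq_iff set_coords_component)
  ultimately show ?thesis unfolding E_def by simp
qed

lemma distinct4_cover:
  fixes i j k l m :: 4
  assumes "distinct [i, j, k, l]"
  shows "m = i \<or> m = j \<or> m = k \<or> m = l"
proof -
  have "{i, j, k, l} = (UNIV :: 4 set)"
    using assms by (intro card_eq_UNIV_imp_eq_UNIV) auto
  then show ?thesis by blast
qed

lemma depends_on_coords_iff_pdx: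
  fixes i j k l :: 4 and f :: "real^4 \<Rightarrow> real"
  assumes dist: "distinct [i, j, k, l]"
    and D: "D = {x. (x $ i, x $ j) \<in> A \<and> (x $ k, x $ l) \<in> B}" "open A" "connected A" "open B"
    and diff: "\<And>x. x \<in> D \<Longrightarrow> f differentiable at x"
  shows "(\<exists>F. \<forall>x\<in>D. f x = F (x $ k) (x $ l)) \<longleftrightarrow> (\<forall>x\<in>D. pdx i f x = 0 \<and> pdx j f x = 0)"
proof -
  have ne: "i \<noteq> j" "k \<noteq> l" "k \<noteq> i" "k \<noteq> j" "l \<noteq> i" "l \<noteq> j" using dist by auto
  have "open D" using D open_coord_product by blast
  show ?thesis
  proof
  assume "\<exists>F. \<forall>x\<in>D. f x = F (x $ k) (x $ l)"
  then obtain F where F: "\<And>x. x \<in> D \<Longrightarrow> f x = F (x $ k) (x $ l)" by blast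
  show "\<forall>x\<in>D. pdx i f x = 0 \<and> pdx j f x = 0"
  proof (intro ballI conjI)
    fix x assume x: "x \<in> D"
    have inv: "f (set_coords y i j (x $ i, x $ j)) = f y" if y: "y \<in> D" for y
    proof -
      have "set_coords y i j (x $ i, x $ j) \<in> D"
        using x y ne by (simp add: D set_coords_component)
      from F[OF this] have "f (set_coords y i j (x $ i, x $ j)) = F (y $ k) (y $ l)"
        using ne by (simp add: set_coords_component)
      then show ?thesis using F[OF y] by simp
    qed
    show "pdx i f x = 0" by (rule pdx_eq_0_if_invariant[OF \<open>open D\<close> x ne(1) diff[OF x] _ inv]) simp
    show "pdx j f x = 0" by (rule pdx_eq_0_if_invariant[OF \<open>open D\<close> x ne(1) diff[OF x] _ inv]) simp
  qed
next
  assume "\<forall>x\<in>D. pdx i f x = 0 \<and> pdx j f x = 0"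
  with diff have zero: "\<And>z. z \<in> D \<Longrightarrow> f differentiable at z \<and> pdx i f z = 0 \<and> pdx j f z = 0"
    by blast
  show "\<exists>F. \<forall>x\<in>D. f x = F (x $ k) (x $ l)"
  proof (cases "D = {}")
    case False
    then obtain x0 where x0: "x0 \<in> D" by blast
    have "f y = f (set_coords x0 k l (y $ k, y $ l))" if y: "y \<in> D" for y
    proof -
      have slice: "set_coords y i j p \<in> D" if "p \<in> A" for p
        using y that ne by (simp add: D set_coords_component)
      have "(y $ i, y $ j) \<in> A" "(x0 $ i, x0 $ j) \<in> A" using y x0 D(1) by auto
      then have "f (set_coords y i j (x0 $ i, x0 $ j)) = f y"
        using const_along_coords[OF D(2,3) ne(1)] slice zero by blast
      moreover have "set_coords y i j (x0 $ i, x0 $ j) $ m = set_coords x0 k l (y $ k, y $ l) $ m" for m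
        using ne distinct4_cover[OF dist, of m] by (auto simp: set_coords_component)
      then have "set_coords y i j (x0 $ i, x0 $ j) = set_coords x0 k l (y $ k, y $ l)"
        by (simp add: vec_eq_iff)
      ultimately show ?thesis by simp
    qed
    then show ?thesis by (intro exI[of _ "\<lambda>s t. f (set_coords x0 k l (s, t))"]) simp
  qed simp
  qed
qed

lemma dep12_iff_pdx:
  fixes f :: "real^4 \<Rightarrow> real"
  assumes "product_domain D" "\<And>x. x \<in> D \<Longrightarrow> f differentiable at x"
  shows "dep12 D f \<longleftrightarrow> (\<forall>x\<in>D. pdx 3 f x = 0 \<and> pdx 4 f x = 0)"
proof -
  obtain A B where "open A" "connected A" "open B" "connected B"
    and "D = {x. (x $ 3, x $ 4) \<in> B \<and> (x $ 1, x $ 2) \<in> A}"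
    using assms(1) unfolding product_domain_def by blast
  then show ?thesis
    unfolding dep12_def by (intro depends_on_coords_iff_pdx[of 3 4 1 2 D B A] assms(2)) auto
qed

lemma dep34_iff_pdx:
  fixes f :: "real^4 \<Rightarrow> real"
  assumes "product_domain D" "\<And>x. x \<in> D \<Longrightarrow> f differentiable at x"
  shows "dep34 D f \<longleftrightarrow> (\<forall>x\<in>D. pdx 1 f x = 0 \<and> pdx 2 f x = 0)"
proof -
  obtain A B where "open A" "connected A" "open B" "connected B"
    and "D = {x. (x $ 1, x $ 2) \<in> A \<and> (x $ 3, x $ 4) \<in> B}"
    using assms(1) unfolding product_domain_def by blast
  then show ?thesis
    unfolding dep34_def by (intro depends_on_coords_iff_pdx[of 1 2 3 4 D A B] assms(2)) auto
qed

lemma dep12_dep34_imp_eq: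
  assumes "product_domain D" "dep12 D f" "dep34 D f" "x \<in> D" "y \<in> D"
  shows "f x = f y"
proof -
  obtain F G where F: "\<And>z. z \<in> D \<Longrightarrow> f z = F (z $ 1) (z $ 2)"
    and G: "\<And>z. z \<in> D \<Longrightarrow> f z = G (z $ 3) (z $ 4)"
    using assms(2,3) unfolding dep12_def dep34_def by blast
  define z where "z = set_coords x 3 4 (y $ 3, y $ 4)"
  have "z \<in> D" using assms(1,4,5) by (auto simp: product_domain_def z_def set_coords_component)
  then show ?thesis
    using F[OF assms(4)] F[of z] G[OF assms(5)] G[of z] by (simp add: z_def set_coords_component)
qed

lemma dep12_comp2:
  assumes "dep12 D f" "dep12 D g" shows "dep12 D (\<lambda>x. h (f x) (g x))"
proof -
  obtain F G where "\<forall>x\<in>D. f x = F (x $ 1) (x $ 2)" "\<forall>x\<in>D. g x = G (x $ 1) (x $ 2)"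
    using assms unfolding dep12_def by blast
  then show ?thesis unfolding dep12_def by (intro exI[of _ "\<lambda>s t. h (F s t) (G s t)"]) simp
qed

lemma dep34_comp2:
  assumes "dep34 D f" "dep34 D g" shows "dep34 D (\<lambda>x. h (f x) (g x))"
proof -
  obtain F G where "\<forall>x\<in>D. f x = F (x $ 3) (x $ 4)" "\<forall>x\<in>D. g x = G (x $ 3) (x $ 4)"
    using assms unfolding dep34_def by blast
  then show ?thesis unfolding dep34_def by (intro exI[of _ "\<lambda>s t. h (F s t) (G s t)"]) simp
qed

lemma dep12_comp: "dep12 D f \<Longrightarrow> dep12 D (\<lambda>x. h (f x))"
  using dep12_comp2[of D f f "\<lambda>a b. h a"] by simp

lemma dep34_comp: "dep34 D f \<Longrightarrow> dep34 D (\<lambda>x. h (f x))"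
  using dep34_comp2[of D f f "\<lambda>a b. h a"] by simp

section \<open>Conformal product charts\<close>

definition lorentzian_factor :: "(real^4) set \<Rightarrow> (real^4 \<Rightarrow> real^4^4) \<Rightarrow> bool" where
  "lorentzian_factor D v \<longleftrightarrow> smooth_mat D v \<and> dep12 D v \<and> (\<forall>x\<in>D. block Vidx (v x) \<and> lorentzian2 Vidx (v x))"

definition riemannian_factor :: "(real^4) set \<Rightarrow> (real^4 \<Rightarrow> real^4^4) \<Rightarrow> bool" where
  "riemannian_factor D h \<longleftrightarrow> smooth_mat D h \<and> dep34 D h \<and> (\<forall>x\<in>D. block Hidx (h x) \<and> riemannian2 Hidx (h x))"

definition conformal_chart :: "(real^4) set \<Rightarrow> (real^4 \<Rightarrow> real^4^4) \<Rightarrow> (real^4 \<Rightarrow> real) \<Rightarrow>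
    (real^4 \<Rightarrow> real^4^4) \<Rightarrow> (real^4 \<Rightarrow> real^4^4) \<Rightarrow> bool" where
  "conformal_chart D Gm lam vh hh \<longleftrightarrow> smooth_fun D lam \<and> lorentzian_factor D vh \<and> riemannian_factor D hh \<and>
     (\<forall>x\<in>D. Gm x = exp (2 * lam x) *\<^sub>R (vh x + hh x))"

lemma conf_product_iff_conformal_chart:
  "conf_product Gm D \<longleftrightarrow> (\<exists>lam vh hh. conformal_chart D Gm lam vh hh)"
  unfolding conf_product_def conformal_chart_def lorentzian_factor_def riemannian_factor_def by blast

lemma t_warped_iff_factors:
  "t_warped Gm D \<longleftrightarrow> (\<exists>lam vh h. smooth_fun D lam \<and> dep34 D lam \<and> (\<exists>x\<in>D. \<exists>y\<in>D. lam x \<noteq> lam y) \<and>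
     lorentzian_factor D vh \<and> riemannian_factor D h \<and> (\<forall>x\<in>D. Gm x = exp (2 * lam x) *\<^sub>R vh x + h x))"
  unfolding t_warped_def lorentzian_factor_def riemannian_factor_def by blast

lemma s_warped_iff_factors:
  "s_warped Gm D \<longleftrightarrow> (\<exists>lam v hh. smooth_fun D lam \<and> dep12 D lam \<and> (\<exists>x\<in>D. \<exists>y\<in>D. lam x \<noteq> lam y) \<and>
     lorentzian_factor D v \<and> riemannian_factor D hh \<and> (\<forall>x\<in>D. Gm x = v x + exp (2 * lam x) *\<^sub>R hh x))"
  unfolding s_warped_def lorentzian_factor_def riemannian_factor_def by blast

lemma bil_scaleR: "bil (c *\<^sub>R A) (s *\<^sub>R u) (s *\<^sub>R w) = c * s * s * bil A u w"
  unfolding bil_expand by (simp add: sum_distrib_left algebra_simps)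

lemma orthogonal_pair_scaleR:
  assumes "c > 0" "u \<in> coord_plane S" "w \<in> coord_plane S" "bil A u u = a" "bil A w w = b" "bil A u w = 0"
  shows "\<exists>u w. u \<in> coord_plane S \<and> w \<in> coord_plane S \<and>
    bil (c *\<^sub>R A) u u = a \<and> bil (c *\<^sub>R A) w w = b \<and> bil (c *\<^sub>R A) u w = 0"
proof (intro exI conjI)
  define s where "s = 1 / sqrt c"
  have "c * s * s = 1" unfolding s_def using assms(1) by (simp add: field_simps)
  then show "bil (c *\<^sub>R A) (s *\<^sub>R u) (s *\<^sub>R u) = a" "bil (c *\<^sub>R A) (s *\<^sub>R w) (s *\<^sub>R w) = b"
    "bil (c *\<^sub>R A) (s *\<^sub>R u) (s *\<^sub>R w) = 0"
    using assms(4-6) by (simp_all add: bil_scaleR)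
  show "s *\<^sub>R u \<in> coord_plane S" "s *\<^sub>R w \<in> coord_plane S"
    using assms(2,3) by (simp_all add: coord_plane_iff)
qed

lemma transpose_scaleR: "transpose (c *\<^sub>R A) = c *\<^sub>R transpose (A :: real^'n^'n)"
  by (simp add: transpose_def vec_eq_iff)

lemma lorentzian2_scaleR: "lorentzian2 S A \<Longrightarrow> c > 0 \<Longrightarrow> lorentzian2 S (c *\<^sub>R A)"
  unfolding lorentzian2_def using orthogonal_pair_scaleR by (metis transpose_scaleR)

lemma riemannian2_scaleR: "riemannian2 S A \<Longrightarrow> c > 0 \<Longrightarrow> riemannian2 S (c *\<^sub>R A)"
  unfolding riemannian2_def using orthogonal_pair_scaleR by (metis transpose_scaleR)

lemma lorentzian_factor_rescale:
  assumes "open D" "smooth_fun D f" "dep12 D f" "lorentzian_factor D v"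
  shows "lorentzian_factor D (\<lambda>x. exp (c * f x) *\<^sub>R v x)"
  using assms smooth_mat_exp_scale dep12_comp2[of D f v "\<lambda>t M. exp (c * t) *\<^sub>R M"] lorentzian2_scaleR
  unfolding lorentzian_factor_def block_def by simp

lemma riemannian_factor_rescale:
  assumes "open D" "smooth_fun D f" "dep34 D f" "riemannian_factor D h"
  shows "riemannian_factor D (\<lambda>x. exp (c * f x) *\<^sub>R h x)"
  using assms smooth_mat_exp_scale dep34_comp2[of D f h "\<lambda>t M. exp (c * t) *\<^sub>R M"] riemannian2_scaleR
  unfolding riemannian_factor_def block_def by simp

text \<open>A \<open>t\<close>-warped metric \<open>e\<^sup>2\<^sup>\<lambda> v\<^sub>1 + h\<close> is the conformal product \<open>e\<^sup>2\<^sup>\<lambda> (v\<^sub>1 + e\<^sup>-\<^sup>2\<^sup>\<lambda> h)\<close>;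
  the second factor stays a product factor because \<open>\<lambda>\<close> only depends on \<open>x\<^sup>3, x\<^sup>4\<close>.\<close>
lemma t_warped_iff_conformal_chart:
  assumes "open D"
  shows "t_warped Gm D \<longleftrightarrow>
    (\<exists>lam vh hh. conformal_chart D Gm lam vh hh \<and> dep34 D lam \<and> (\<exists>x\<in>D. \<exists>y\<in>D. lam x \<noteq> lam y))"
proof
  assume "t_warped Gm D"
  then obtain lam vh h where lam: "smooth_fun D lam" "dep34 D lam" "\<exists>x\<in>D. \<exists>y\<in>D. lam x \<noteq> lam y"
    and factors: "lorentzian_factor D vh" "riemannian_factor D h"
    and Gm: "\<forall>x\<in>D. Gm x = exp (2 * lam x) *\<^sub>R vh x + h x"
    unfolding t_warped_iff_factors by blast
  have "conformal_chart D Gm lam vh (\<lambda>x. exp (- 2 * lam x) *\<^sub>R h x)"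
    unfolding conformal_chart_def
    using lam factors Gm riemannian_factor_rescale[OF assms lam(1,2) factors(2), of "-2"]
    by (simp add: scaleR_add_right mult_exp_exp)
  with lam show "\<exists>lam vh hh. conformal_chart D Gm lam vh hh \<and> dep34 D lam \<and> (\<exists>x\<in>D. \<exists>y\<in>D. lam x \<noteq> lam y)"
    by blast
next
  assume "\<exists>lam vh hh. conformal_chart D Gm lam vh hh \<and> dep34 D lam \<and> (\<exists>x\<in>D. \<exists>y\<in>D. lam x \<noteq> lam y)"
  then obtain lam vh hh where chart: "conformal_chart D Gm lam vh hh" and lam: "dep34 D lam"
    "\<exists>x\<in>D. \<exists>y\<in>D. lam x \<noteq> lam y" by blast
  then have "riemannian_factor D (\<lambda>x. exp (2 * lam x) *\<^sub>R hh x)"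
    using riemannian_factor_rescale[OF assms] unfolding conformal_chart_def by blast
  with chart lam show "t_warped Gm D"
    unfolding t_warped_iff_factors conformal_chart_def by (fastforce simp: scaleR_add_right)
qed

lemma s_warped_iff_conformal_chart:
  assumes "open D"
  shows "s_warped Gm D \<longleftrightarrow>
    (\<exists>lam vh hh. conformal_chart D Gm lam vh hh \<and> dep12 D lam \<and> (\<exists>x\<in>D. \<exists>y\<in>D. lam x \<noteq> lam y))"
proof
  assume "s_warped Gm D"
  then obtain lam v hh where lam: "smooth_fun D lam" "dep12 D lam" "\<exists>x\<in>D. \<exists>y\<in>D. lam x \<noteq> lam y"
    and factors: "lorentzian_factor D v" "riemannian_factor D hh"
    and Gm: "\<forall>x\<in>D. Gm x = v x + exp (2 * lam x) *\<^sub>R hh x"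
    unfolding s_warped_iff_factors by blast
  have "conformal_chart D Gm lam (\<lambda>x. exp (- 2 * lam x) *\<^sub>R v x) hh"
    unfolding conformal_chart_def
    using lam factors Gm lorentzian_factor_rescale[OF assms lam(1,2) factors(1), of "-2"]
    by (simp add: scaleR_add_right mult_exp_exp)
  with lam show "\<exists>lam vh hh. conformal_chart D Gm lam vh hh \<and> dep12 D lam \<and> (\<exists>x\<in>D. \<exists>y\<in>D. lam x \<noteq> lam y)"
    by blast
next
  assume "\<exists>lam vh hh. conformal_chart D Gm lam vh hh \<and> dep12 D lam \<and> (\<exists>x\<in>D. \<exists>y\<in>D. lam x \<noteq> lam y)"
  then obtain lam vh hh where chart: "conformal_chart D Gm lam vh hh" and lam: "dep12 D lam"
    "\<exists>x\<in>D. \<exists>y\<in>D. lam x \<noteq> lam y" by blast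
  then have "lorentzian_factor D (\<lambda>x. exp (2 * lam x) *\<^sub>R vh x)"
    using lorentzian_factor_rescale[OF assms] unfolding conformal_chart_def by blast
  with chart lam show "s_warped Gm D"
    unfolding s_warped_iff_factors conformal_chart_def by (fastforce simp: scaleR_add_right)
qed

lemma conformal_chart_metric_at:
  assumes "conformal_chart D Gm lam vh hh" "y \<in> D"
  shows "transpose (Gm y) = Gm y" "block_diagonal (Gm y)" "det2 (Gm y) 1 2 \<noteq> 0" "det2 (Gm y) 3 4 \<noteq> 0"
proof -
  have V: "block Vidx (vh y)" "lorentzian2 Vidx (vh y)" and H: "block Hidx (hh y)" "riemannian2 Hidx (hh y)"
    and Gm: "Gm y = exp (2 * lam y) *\<^sub>R (vh y + hh y)"
    using assms unfolding conformal_chart_def lorentzian_factor_def riemannian_factor_def by auto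
  have "transpose (vh y) = vh y" "transpose (hh y) = hh y"
    using V(2) H(2) unfolding lorentzian2_def riemannian2_def by auto
  then show "transpose (Gm y) = Gm y" by (simp add: Gm transpose_scaleR transpose_def vec_eq_iff)
  show "block_diagonal (Gm y)"
    using V(1) H(1) unfolding block_diagonal_def block_def Gm Hidx_eq_compl by auto
  have "Gm y $ a $ b = exp (2 * lam y) * vh y $ a $ b" if "a \<in> Vidx" "b \<in> Vidx" for a b
    using H(1) that unfolding Gm block_def Hidx_eq_compl by simp
  then have "det2 (Gm y) 1 2 = exp (2 * lam y) * exp (2 * lam y) * det2 (vh y) 1 2"
    by (simp add: det2_def Vidx_def algebra_simps)
  then show "det2 (Gm y) 1 2 \<noteq> 0" using lorentzian2_det2[of 1 2 "vh y"] V(2) by (simp add: Vidx_def)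
  have "Gm y $ a $ b = exp (2 * lam y) * hh y $ a $ b" if "a \<in> Hidx" "b \<in> Hidx" for a b
    using V(1) that unfolding Gm block_def Hidx_eq_compl by simp
  then have "det2 (Gm y) 3 4 = exp (2 * lam y) * exp (2 * lam y) * det2 (hh y) 3 4"
    by (simp add: det2_def Hidx_def algebra_simps)
  then show "det2 (Gm y) 3 4 \<noteq> 0" using riemannian2_det2[of 3 4 "hh y"] H(2) by (simp add: Hidx_def)
qed

lemma conformal_chart_projections:
  assumes "conformal_chart D Gm lam vh hh" "y \<in> D"
  shows "vproj Gm y = coord_proj Vidx" "hproj Gm y = coord_proj Hidx"
proof -
  note metric = conformal_chart_metric_at[OF assms]
  show v: "vproj Gm y = coord_proj Vidx"
    unfolding vproj_def
  proof (rule gproj_eq_coord_proj[of Vidx 1 2])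
    show "Gm y $ 2 $ 1 = Gm y $ 1 $ 2" using transpose_eq_imp_symmetric[OF metric(1)] .
    show "\<And>a b. a \<notin> Vidx \<Longrightarrow> b \<in> Vidx \<Longrightarrow> Gm y $ a $ b = 0"
      using metric(2) unfolding block_diagonal_def Hidx_eq_compl by blast
  qed (use metric(3) in \<open>simp_all add: Vidx_def\<close>)
  show "hproj Gm y = coord_proj Hidx"
    unfolding hproj_def v coord_proj_compl Hidx_eq_compl ..
qed

lemma conformal_chart_inverse:
  assumes "conformal_chart D Gm lam vh hh" "x \<in> D"
  shows "matrix_inv (Gm x) = block_inverse (Gm x)" "Gm x ** matrix_inv (Gm x) = mat 1"
proof -
  note inverse = block_inverse_is_inverse[OF conformal_chart_metric_at[OF assms]]
  show "matrix_inv (Gm x) = block_inverse (Gm x)" by (rule matrix_inv_eq[OF inverse])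
  then show "Gm x ** matrix_inv (Gm x) = mat 1" using inverse(1) by simp
qed

lemma conformal_chart_split:
  assumes "product_domain D" "conformal_chart D Gm lam vh hh" "x \<in> D"
  shows "conformally_split_metric D Vidx Gm lam vh hh x" "conformally_split_metric D Hidx Gm lam hh vh x"
proof -
  note chart = assms(2)[unfolded conformal_chart_def lorentzian_factor_def riemannian_factor_def]
  note metric = conformal_chart_metric_at[OF assms(2,3)]
  note inverse = conformal_chart_inverse[OF assms(2,3)]
  have symmetric: "Gm x $ a $ b = Gm x $ b $ a" for a b
    using transpose_eq_imp_symmetric[OF metric(1)] .
  have normal_V: "pdx l (\<lambda>y. vh y $ a $ b) x = 0" if "l \<notin> Vidx" for l a b
  proof -
    have "dep12 D (\<lambda>y. vh y $ a $ b)" using chart dep12_comp[of D vh "\<lambda>M. M $ a $ b"] by blast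
    moreover have "\<And>z. z \<in> D \<Longrightarrow> (\<lambda>y. vh y $ a $ b) differentiable at z"
      using chart smooth_mat_differentiable by blast
    ultimately have "\<forall>x\<in>D. pdx 3 (\<lambda>y. vh y $ a $ b) x = 0 \<and> pdx 4 (\<lambda>y. vh y $ a $ b) x = 0"
      using dep12_iff_pdx[OF assms(1)] by simp
    then show ?thesis using that assms(3) exhaust_4[of l] by (auto simp: Vidx_def)
  qed
  have normal_H: "pdx l (\<lambda>y. hh y $ a $ b) x = 0" if "l \<notin> Hidx" for l a b
  proof -
    have "dep34 D (\<lambda>y. hh y $ a $ b)" using chart dep34_comp[of D hh "\<lambda>M. M $ a $ b"] by blast
    moreover have "\<And>z. z \<in> D \<Longrightarrow> (\<lambda>y. hh y $ a $ b) differentiable at z"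
      using chart smooth_mat_differentiable by blast
    ultimately have "\<forall>x\<in>D. pdx 1 (\<lambda>y. hh y $ a $ b) x = 0 \<and> pdx 2 (\<lambda>y. hh y $ a $ b) x = 0"
      using dep34_iff_pdx[OF assms(1)] by simp
    then show ?thesis using that assms(3) exhaust_4[of l] by (auto simp: Hidx_def)
  qed
  show "conformally_split_metric D Vidx Gm lam vh hh x"
  proof
    show "\<And>k l. (k \<in> Vidx \<longleftrightarrow> l \<notin> Vidx) \<Longrightarrow> matrix_inv (Gm x) $ k $ l = 0"
      using block_inverse_offdiagonal by (auto simp: inverse(1) Hidx_eq_compl)
    show "(\<Sum>a\<in>Vidx. \<Sum>b\<in>Vidx. matrix_inv (Gm x) $ a $ b * Gm x $ a $ b) = 2"
      using block_inverse_trace[OF metric(1,3,4)] by (simp add: inverse(1))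
  qed (use assms chart normal_V symmetric in \<open>auto simp: product_domain_open block_def Hidx_eq_compl
    smooth_fun_differentiable smooth_mat_differentiable\<close>)
  show "conformally_split_metric D Hidx Gm lam hh vh x"
  proof
    show "\<And>k l. (k \<in> Hidx \<longleftrightarrow> l \<notin> Hidx) \<Longrightarrow> matrix_inv (Gm x) $ k $ l = 0"
      using block_inverse_offdiagonal by (auto simp: inverse(1) Hidx_eq_compl)
    show "(\<Sum>a\<in>Hidx. \<Sum>b\<in>Hidx. matrix_inv (Gm x) $ a $ b * Gm x $ a $ b) = 2"
      using block_inverse_trace[OF metric(1,3,4)] by (simp add: inverse(1))
  qed (use assms chart normal_H symmetric in \<open>auto simp: product_domain_open block_def Hidx_eq_compl
    smooth_fun_differentiable smooth_mat_differentiable add.commute\<close>)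
qed

section \<open>Minimality of the principal planes\<close>

lemma tr_S_v_conformal_chart:
  assumes "product_domain D" "conformal_chart D Gm lam vh hh" "x \<in> D"
  shows "tr_S_v Gm x = (-2) *\<^sub>R (matrix_inv (Gm x) *v normal_grad Hidx lam x)"
proof -
  interpret conformally_split_metric D Vidx Gm lam vh hh x
    by (rule conformal_chart_split(1)[OF assms])
  have "tr_S_v Gm x = (-2) *\<^sub>R (matrix_inv (Gm x) *v normal_grad (- Vidx) lam x)"
    unfolding tr_S_v_def Q_v_def
    by (rule trace_second_fundamental_form)
      (use conformal_chart_projections[OF assms(2)] assms(3) in \<open>simp_all add: Hidx_eq_compl\<close>)
  then show ?thesis by (simp add: Hidx_eq_compl)
qed

lemma tr_S_h_conformal_chart:
  assumes "product_domain D" "conformal_chart D Gm lam vh hh" "x \<in> D"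
  shows "tr_S_h Gm x = (-2) *\<^sub>R (matrix_inv (Gm x) *v normal_grad Vidx lam x)"
proof -
  interpret conformally_split_metric D Hidx Gm lam hh vh x
    by (rule conformal_chart_split(2)[OF assms])
  have "tr_S_h Gm x = (-2) *\<^sub>R (matrix_inv (Gm x) *v normal_grad (- Hidx) lam x)"
    unfolding tr_S_h_def Q_h_def
    by (rule trace_second_fundamental_form)
      (use conformal_chart_projections[OF assms(2)] assms(3) in \<open>simp_all add: Hidx_eq_compl\<close>)
  then show ?thesis by (simp add: Hidx_eq_compl)
qed

lemma right_inverse_mv_eq_0_iff:
  fixes M N :: "'a::comm_ring_1^'n^'n"
  assumes "M ** N = mat 1"
  shows "N *v d = 0 \<longleftrightarrow> d = 0"
  using assms by (metis matrix_vector_mul_assoc matrix_vector_mul_lid matrix_vector_mult_0_right)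

lemma normal_grad_eq_0_iff:
  "normal_grad Hidx f x = 0 \<longleftrightarrow> pdx 3 f x = 0 \<and> pdx 4 f x = 0"
  "normal_grad Vidx f x = 0 \<longleftrightarrow> pdx 1 f x = 0 \<and> pdx 2 f x = 0"
  by (simp_all add: normal_grad_def vec_eq_iff forall_4 Hidx_def Vidx_def)

lemma minimal_V_iff_dep12:
  assumes "product_domain D" "conformal_chart D Gm lam vh hh"
  shows "minimal_V Gm D \<longleftrightarrow> dep12 D lam"
proof -
  have "tr_S_v Gm x = 0 \<longleftrightarrow> pdx 3 lam x = 0 \<and> pdx 4 lam x = 0" if "x \<in> D" for x
    using tr_S_v_conformal_chart[OF assms that] conformal_chart_inverse(2)[OF assms(2) that]
    by (simp add: right_inverse_mv_eq_0_iff normal_grad_eq_0_iff)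
  moreover have "smooth_fun D lam" using assms(2) unfolding conformal_chart_def by blast
  ultimately show ?thesis
    unfolding minimal_V_def by (simp add: dep12_iff_pdx[OF assms(1)] smooth_fun_differentiable)
qed

lemma minimal_H_iff_dep34:
  assumes "product_domain D" "conformal_chart D Gm lam vh hh"
  shows "minimal_H Gm D \<longleftrightarrow> dep34 D lam"
proof -
  have "tr_S_h Gm x = 0 \<longleftrightarrow> pdx 1 lam x = 0 \<and> pdx 2 lam x = 0" if "x \<in> D" for x
    using tr_S_h_conformal_chart[OF assms that] conformal_chart_inverse(2)[OF assms(2) that]
    by (simp add: right_inverse_mv_eq_0_iff normal_grad_eq_0_iff)
  moreover have "smooth_fun D lam" using assms(2) unfolding conformal_chart_def by blast
  ultimately show ?thesis
    unfolding minimal_H_def by (simp add: dep34_iff_pdx[OF assms(1)] smooth_fun_differentiable)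
qed

lemma dep12_if_const:
  assumes "\<And>x y. x \<in> D \<Longrightarrow> y \<in> D \<Longrightarrow> f x = f y" shows "dep12 D f"
proof (cases "D = {}")
  case False
  then obtain x0 where "x0 \<in> D" by blast
  then show ?thesis unfolding dep12_def using assms by (intro exI[of _ "\<lambda>_ _. f x0"] ballI) blast
qed (simp add: dep12_def)

lemma dep34_if_const:
  assumes "\<And>x y. x \<in> D \<Longrightarrow> y \<in> D \<Longrightarrow> f x = f y" shows "dep34 D f"
proof (cases "D = {}")
  case False
  then obtain x0 where "x0 \<in> D" by blast
  then show ?thesis unfolding dep34_def using assms by (intro exI[of _ "\<lambda>_ _. f x0"] ballI) blast
qed (simp add: dep34_def)

lemma dep12_dep34_iff_const:
  assumes "product_domain D"
  shows "dep12 D f \<and> dep34 D f \<longleftrightarrow> (\<forall>x\<in>D. \<forall>y\<in>D. f x = f y)"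
proof
  assume "dep12 D f \<and> dep34 D f"
  then show "\<forall>x\<in>D. \<forall>y\<in>D. f x = f y" using dep12_dep34_imp_eq[OF assms] by blast
next
  assume "\<forall>x\<in>D. \<forall>y\<in>D. f x = f y"
  then have "\<And>x y. x \<in> D \<Longrightarrow> y \<in> D \<Longrightarrow> f x = f y" by blast
  then show "dep12 D f \<and> dep34 D f" by (intro conjI dep12_if_const dep34_if_const)
qed

lemma class10_iff_dep34_nonconstant:
  assumes "product_domain D" "conformal_chart D Gm lam vh hh"
  shows "class10 Gm D \<longleftrightarrow> dep34 D lam \<and> (\<exists>x\<in>D. \<exists>y\<in>D. lam x \<noteq> lam y)"
  unfolding class10_def minimal_H_iff_dep34[OF assms] minimal_V_iff_dep12[OF assms]
  using dep12_dep34_iff_const[OF assms(1), of lam] by auto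

lemma class01_iff_dep12_nonconstant:
  assumes "product_domain D" "conformal_chart D Gm lam vh hh"
  shows "class01 Gm D \<longleftrightarrow> dep12 D lam \<and> (\<exists>x\<in>D. \<exists>y\<in>D. lam x \<noteq> lam y)"
  unfolding class01_def minimal_H_iff_dep34[OF assms] minimal_V_iff_dep12[OF assms]
  using dep12_dep34_iff_const[OF assms(1), of lam] by auto

lemma t_warped_iff_class10:
  assumes "product_domain D"
  shows "t_warped Gm D \<longleftrightarrow> conf_product Gm D \<and> class10 Gm D"
proof -
  have "t_warped Gm D \<longleftrightarrow> (\<exists>lam vh hh. conformal_chart D Gm lam vh hh \<and> class10 Gm D)"
    unfolding t_warped_iff_conformal_chart[OF product_domain_open[OF assms]]
    using class10_iff_dep34_nonconstant[OF assms] by (intro ex_cong1 conj_cong refl) simp_all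
  then show ?thesis unfolding conf_product_iff_conformal_chart by simp
qed

lemma s_warped_iff_class01:
  assumes "product_domain D"
  shows "s_warped Gm D \<longleftrightarrow> conf_product Gm D \<and> class01 Gm D"
proof -
  have "s_warped Gm D \<longleftrightarrow> (\<exists>lam vh hh. conformal_chart D Gm lam vh hh \<and> class01 Gm D)"
    unfolding s_warped_iff_conformal_chart[OF product_domain_open[OF assms]]
    using class01_iff_dep12_nonconstant[OF assms] by (intro ex_cong1 conj_cong refl) simp_all
  then show ?thesis unfolding conf_product_iff_conformal_chart by simp
qed

lemma locally_chart_cong:
  assumes "\<And>Gm D. product_domain D \<Longrightarrow> P Gm D \<longleftrightarrow> Q Gm D"
  shows "locally_chart P U G \<longleftrightarrow> locally_chart Q U G"
proof -
  have "(product_domain D \<and> diffeo \<phi> D W \<and> P (pullback G \<phi>) D) \<longleftrightarrow>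
      (product_domain D \<and> diffeo \<phi> D W \<and> Q (pullback G \<phi>) D)" for D \<phi> W
    using assms by auto
  then show ?thesis unfolding locally_chart_def by simp
qed

theorem proposition9:
  fixes U :: "(real^4) set" and G :: "real^4 \<Rightarrow> real^4^4"
  assumes "spacetime U G"
  shows "(locally_chart t_warped U G \<longleftrightarrow> locally_chart (\<lambda>Gm D. conf_product Gm D \<and> class10 Gm D) U G) \<and>
         (locally_chart s_warped U G \<longleftrightarrow> locally_chart (\<lambda>Gm D. conf_product Gm D \<and> class01 Gm D) U G)"
proof
  show "locally_chart t_warped U G \<longleftrightarrow> locally_chart (\<lambda>Gm D. conf_product Gm D \<and> class10 Gm D) U G"
    by (rule locally_chart_cong) (rule t_warped_iff_class10)
  show "locally_chart s_warped U G \<longleftrightarrow> locally_chart (\<lambda>Gm D. conf_product Gm D \<and> class01 Gm D) U G"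
    by (rule locally_chart_cong) (rule s_warped_iff_class01)
qed

end
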